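(* Let $U\in\widetilde{\mathcal V}^r$, let $\Phi$ be a $q\times q$ matrix operator acting on $\mathcal B^q$, let $K_0\in\mathcal B^q$ and set $K_k=\Phi^kK_0$ for $k\ge0$. Suppose that to each $X\in\mathcal B^q$ there is assigned $\Omega(X)\in\widetilde{\mathcal V}^r$ satisfying the characteristic operator equation \[ (E\Omega(X))U-U\Omega(X)=U'[\Phi X]-\lambda U'[X]. \] Let $V_0,W_0\in\widetilde{\mathcal V}^r$ and $\rho_0\in\mathcal B^q$ satisfy \[ (EV_0)U-UV_0=U'[K_0],\qquad (EW_0)U-UW_0=U'[\rho_0]+\lambda U_\lambda . \] Define $\rho_l=\Phi^l\rho_0$ for $l\ge1$ and \[ V_k=\lambda^kV_0+\sum_{i=1}^k\lambda^{k-i}\Omega(K_{i-1}),\qquad W_l=\lambda^lW_0+\sum_{j=1}^l\lambda^{l-j}\Omega(\rho_{j-1}),\qquad k,l\ge1 . \] Then for all $k,l\ge0$, \[ (EV_k)U-UV_k=U'[K_k],\qquad (EW_l)U-UW_l=U'[\rho_l]+\lambda^{l+1}U_\lambda . \] Consequently $u_t=K_k$ and $u_t=\rho_l$ have the isospectral ($\lambda_t=0$) and nonisospectral ($\lambda_t=\lambda^{l+1}$) discrete zero curvature representations $U_t=(EV_k)U-UV_k$ and $U_t=(EW_l)U-UW_l$, respectively. The same conclusion holds in the following variant: $J,M$ are $q\times q$ matrix operators, $K_k=JG_k=MG_{k-1}$ ($k\ge0$) with $G_{k-1}\in\mathcal B^q$ ($k\ge0$), $\rho_0=J\gamma_0$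 and $\rho_l=J\gamma_l=M\gamma_{l-1}$ ($l\ge1$) with $\gamma_l\in\mathcal B^q$, $\Omega$ replaced by $\Omega_J(G)\in\widetilde{\mathcal V}^r$ satisfying $(E\Omega_J(G))U-U\Omega_J(G)=U'[MG]-\lambda U'[JG]$ for each $G\in\mathcal B^q$, and $V_k=\lambda^kV_0+\sum_{i=1}^k\lambda^{k-i}\Omega_J(G_{i-1})$, $W_l=\lambda^lW_0+\sum_{j=1}^l\lambda^{l-j}\Omega_J(\gamma_{j-1})$.
   Context: $u=(u_1,\dots,u_q)^T$, $u_i(t,n)$ real functions on $\mathbb R\times\mathbb Z$; $\mathcal B$ = real functions $P(t,n,u)$ smooth in $t,n$ and $C^\infty$-Gateaux differentiable in $u$; $\mathcal B^q$ = $q$-vectors over $\mathcal B$; $\widetilde{\mathcal V}^r$ = $r\times r$ matrices with entries in $\mathcal B$ depending smoothly on a real parameter $\lambda$; $U_\lambda=\partial U/\partial\lambda$. $E$ is the shift operator $n\mapsto n+1$, acting on matrices entrywise on all $n$-dependence (including through $u$). Gateaux derivative $X'[S]=\frac{d}{d\varepsilon}|_{\varepsilon=0}X(u+\varepsilon S)$, linear in $S$. The discrete spectral problem is $E\phi=U\phi$, $\phi_t=V\phi$, whose compatibility condition is the discrete zero curvature equation $U_t=(EV)U-UV$, with $U_t=U'[u_t]+\lambda_tU_\lambda$. *)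

theory Defs
  imports "HOL-Analysis.Analysis"
begin

text \<open>A field configuration u = (u_1,...,u_q): u t n is the vector (u_i(t,n))_i.\<close>
type_synonym 'q fld = "real \<Rightarrow> int \<Rightarrow> real^'q"

text \<open>Elements of B^q: X(t,n,u), written X u t n (may depend on the whole field u,
  in particular on u(t,n) and its shifts).\<close>
type_synonym 'q bvec = "'q fld \<Rightarrow> real \<Rightarrow> int \<Rightarrow> real^'q"

text \<open>Elements of the r x r matrix space over B depending on the spectral parameter lambda:
  M lam u t n.\<close>
type_synonym ('q,'r) vmat = "real \<Rightarrow> 'q fld \<Rightarrow> real \<Rightarrow> int \<Rightarrow> real^'r^'r"

definition shiftE :: "('q::finite,'r::finite) vmat \<Rightarrow> ('q,'r) vmat" where
  "shiftE M = (\<lambda>lam u t n. M lam u t (n + 1))"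

definition zc :: "('q::finite,'r::finite) vmat \<Rightarrow> ('q,'r) vmat \<Rightarrow> ('q,'r) vmat" where
  "zc V U = (\<lambda>lam u t n. shiftE V lam u t n ** U lam u t n - U lam u t n ** V lam u t n)"

definition gateaux :: "('q::finite,'r::finite) vmat \<Rightarrow> 'q bvec \<Rightarrow> ('q,'r) vmat" where
  "gateaux U S = (\<lambda>lam u t n. \<chi> i j.
     deriv (\<lambda>eps. U lam (\<lambda>t' n'. u t' n' + eps *\<^sub>R S u t' n') t n $ i $ j) 0)"

definition Ulam :: "('q::finite,'r::finite) vmat \<Rightarrow> ('q,'r) vmat" where
  "Ulam U = (\<lambda>lam u t n. \<chi> i j. deriv (\<lambda>mu. U mu u t n $ i $ j) lam)"

definition Ut :: "('q::finite,'r::finite) vmat \<Rightarrow> 'q bvec \<Rightarrow> (real \<Rightarrow> real) \<Rightarrow> ('q,'r) vmat" where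
  "Ut U ut lt = (\<lambda>lam u t n. gateaux U ut lam u t n + lt lam *\<^sub>R Ulam U lam u t n)"

definition lamsum :: "('q::finite,'r::finite) vmat \<Rightarrow> ('q bvec \<Rightarrow> ('q,'r) vmat) \<Rightarrow> (nat \<Rightarrow> 'q bvec) \<Rightarrow> nat \<Rightarrow> ('q,'r) vmat" where
  "lamsum A0 Om X k = (\<lambda>lam u t n. lam ^ k *\<^sub>R A0 lam u t n
      + (\<Sum>i = 1..k. lam ^ (k - i) *\<^sub>R Om (X (i - 1)) lam u t n))"

end

theory Submission
  imports Defs
begin

text \<open>
  Since \<open>V\<^sub>k\<^sub>+\<^sub>1 = \<lambda> V\<^sub>k + \<Omega>(K\<^sub>k)\<close> and \<open>V \<mapsto> (EV)U - UV\<close> is linear over functions of \<open>\<lambda>\<close>, the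
  characteristic operator equation \<open>(E\<Omega>(K\<^sub>k))U - U\<Omega>(K\<^sub>k) = U'[K\<^sub>k\<^sub>+\<^sub>1] - \<lambda> U'[K\<^sub>k]\<close> makes the
  right-hand sides telescope, while the spectral term \<open>\<lambda> U\<^sub>\<lambda>\<close> of \<open>W\<^sub>0\<close> is only multiplied
  by \<open>\<lambda>\<^sup>l\<close>. The recursion operator \<open>\<Phi>\<close> is the special case \<open>J = id\<close>, \<open>M = \<Phi>\<close> of an operator pair.
\<close>

lemma matrix_add_rdistrib:
  fixes A B :: "'a::semiring_1^'n^'m" and C :: "'a^'p^'n"
  shows "(A + B) ** C = A ** C + B ** C"
  by (simp add: vec_eq_iff matrix_matrix_mult_def sum.distrib distrib_right)

lemma zc_scaleR_add:
  "zc (\<lambda>lam u t n. c lam *\<^sub>R A lam u t n + B lam u t n) U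
     = (\<lambda>lam u t n. c lam *\<^sub>R zc A U lam u t n + zc B U lam u t n)"
  by (simp add: zc_def shiftE_def fun_eq_iff matrix_add_ldistrib matrix_add_rdistrib
      matrix_scalar_ac scalar_matrix_assoc[symmetric] scaleR_diff_right)

lemma lamsum_Suc:
  "lamsum A Om X (Suc k) = (\<lambda>lam u t n. lam *\<^sub>R lamsum A Om X k lam u t n + Om (X k) lam u t n)"
proof -
  have "(\<Sum>i = 1..Suc k. lam ^ (Suc k - i) *\<^sub>R Om (X (i - 1)) lam u t n)
      = lam *\<^sub>R (\<Sum>i = 1..k. lam ^ (k - i) *\<^sub>R Om (X (i - 1)) lam u t n) + Om (X k) lam u t n"
    for lam u t n
  proof -
    have "(\<Sum>i = 1..k. lam ^ (Suc k - i) *\<^sub>R Om (X (i - 1)) lam u t n)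
        = (\<Sum>i = 1..k. lam *\<^sub>R (lam ^ (k - i) *\<^sub>R Om (X (i - 1)) lam u t n))"
      by (rule sum.cong) (auto simp: Suc_diff_le)
    then show ?thesis
      by (simp add: scaleR_sum_right)
  qed
  then show ?thesis
    by (simp add: lamsum_def fun_eq_iff scaleR_add_right)
qed

lemma zc_lamsum_telescoping:
  assumes step: "\<And>k. zc (Om (X k)) U = (\<lambda>lam u t n. F (Suc k) lam u t n - lam *\<^sub>R F k lam u t n)"
    and base: "zc A U = F 0"
  shows "zc (lamsum A Om X k) U = F k"
proof (induction k)
  case 0
  show ?case
    using base by (simp add: lamsum_def)
next
  case (Suc k)
  show ?case
    unfolding lamsum_Suc zc_scaleR_add Suc step by (simp add: fun_eq_iff)
qed

lemma zc_lamsum_operator_pair: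
  assumes Om: "\<And>Z. zc (Om Z) U = (\<lambda>lam u t n. gateaux U (M Z) lam u t n - lam *\<^sub>R gateaux U (J Z) lam u t n)"
    and J: "\<And>k. J (X k) = Y k"
    and M: "\<And>k. M (X k) = Y (Suc k)"
    and base: "zc A U = (\<lambda>lam u t n. gateaux U (Y 0) lam u t n + c lam *\<^sub>R R lam u t n)"
  shows "zc (lamsum A Om X k) U
    = (\<lambda>lam u t n. gateaux U (Y k) lam u t n + (c lam * lam ^ k) *\<^sub>R R lam u t n)"
proof (rule zc_lamsum_telescoping)
  fix k
  show "zc (Om (X k)) U = (\<lambda>lam u t n.
      (gateaux U (Y (Suc k)) lam u t n + (c lam * lam ^ Suc k) *\<^sub>R R lam u t n)
      - lam *\<^sub>R (gateaux U (Y k) lam u t n + (c lam * lam ^ k) *\<^sub>R R lam u t n))"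
    by (simp add: Om J M fun_eq_iff algebra_simps)
qed (simp add: base)

lemma Ut_isospectral: "Ut U S (\<lambda>lam. 0) = gateaux U S"
  by (simp add: Ut_def)

theorem theorem3:
  shows "(\<forall>(U :: ('q::finite,'r::finite) vmat) (Phi :: 'q bvec \<Rightarrow> 'q bvec) (K0 :: 'q bvec)
            (Omega :: 'q bvec \<Rightarrow> ('q,'r) vmat) (V0 :: ('q,'r) vmat) (W0 :: ('q,'r) vmat) (rho0 :: 'q bvec).
      (\<forall>X. zc (Omega X) U = (\<lambda>lam u t n. gateaux U (Phi X) lam u t n - lam *\<^sub>R gateaux U X lam u t n))
      \<and> zc V0 U = gateaux U K0
      \<and> zc W0 U = (\<lambda>lam u t n. gateaux U rho0 lam u t n + lam *\<^sub>R Ulam U lam u t n)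
      \<longrightarrow>
      (let K = (\<lambda>k. (Phi ^^ k) K0); rho = (\<lambda>l. (Phi ^^ l) rho0);
           V = lamsum V0 Omega K; W = lamsum W0 Omega rho in
        (\<forall>k. zc (V k) U = gateaux U (K k))
        \<and> (\<forall>l. zc (W l) U = (\<lambda>lam u t n. gateaux U (rho l) lam u t n + lam ^ (l + 1) *\<^sub>R Ulam U lam u t n))
        \<and> (\<forall>k. Ut U (K k) (\<lambda>lam. 0) = zc (V k) U)
        \<and> (\<forall>l. Ut U (rho l) (\<lambda>lam. lam ^ (l + 1)) = zc (W l) U)))
   \<and>
   (\<forall>(U :: ('q,'r) vmat) (J :: 'q bvec \<Rightarrow> 'q bvec) (M :: 'q bvec \<Rightarrow> 'q bvec)
            (K :: nat \<Rightarrow> 'q bvec) (G :: int \<Rightarrow> 'q bvec) (rho :: nat \<Rightarrow> 'q bvec) (gamma :: nat \<Rightarrow> 'q bvec)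
            (OmegaJ :: 'q bvec \<Rightarrow> ('q,'r) vmat) (V0 :: ('q,'r) vmat) (W0 :: ('q,'r) vmat).
      (\<forall>k. K k = J (G (int k)) \<and> K k = M (G (int k - 1)))
      \<and> rho 0 = J (gamma 0)
      \<and> (\<forall>l\<ge>1. rho l = J (gamma l) \<and> rho l = M (gamma (l - 1)))
      \<and> (\<forall>X. zc (OmegaJ X) U = (\<lambda>lam u t n. gateaux U (M X) lam u t n - lam *\<^sub>R gateaux U (J X) lam u t n))
      \<and> zc V0 U = gateaux U (K 0)
      \<and> zc W0 U = (\<lambda>lam u t n. gateaux U (rho 0) lam u t n + lam *\<^sub>R Ulam U lam u t n)
      \<longrightarrow>
      (let V = lamsum V0 OmegaJ (\<lambda>i. G (int i)); W = lamsum W0 OmegaJ gamma in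
        (\<forall>k. zc (V k) U = gateaux U (K k))
        \<and> (\<forall>l. zc (W l) U = (\<lambda>lam u t n. gateaux U (rho l) lam u t n + lam ^ (l + 1) *\<^sub>R Ulam U lam u t n))
        \<and> (\<forall>k. Ut U (K k) (\<lambda>lam. 0) = zc (V k) U)
        \<and> (\<forall>l. Ut U (rho l) (\<lambda>lam. lam ^ (l + 1)) = zc (W l) U)))"
  apply (intro conjI allI impI; elim conjE)
  subgoal premises h for U Phi K0 Omega V0 W0 rho0
    using zc_lamsum_operator_pair[where J=id and M=Phi and X="\<lambda>k. (Phi ^^ k) K0"
        and Y="\<lambda>k. (Phi ^^ k) K0" and c="\<lambda>_. 0" and R="Ulam U"]
      zc_lamsum_operator_pair[where J=id and M=Phi and X="\<lambda>l. (Phi ^^ l) rho0"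
        and Y="\<lambda>l. (Phi ^^ l) rho0" and c="\<lambda>lam. lam" and R="Ulam U"]
      h by (simp add: Ut_isospectral Ut_def)
  subgoal premises h for U J M K G rho gamma OmegaJ V0 W0
  proof -
    have KJ: "J (G (int k)) = K k" for k
      using h(1) by simp
    have KM: "M (G (int k)) = K (Suc k)" for k
      using h(1)[rule_format, of "Suc k", THEN conjunct2] by simp
    have rhoJ: "J (gamma l) = rho l" for l
      using h(2) h(3)[rule_format, of l, THEN conjunct1] by (cases "l = 0") simp_all
    have rhoM: "M (gamma l) = rho (Suc l)" for l
      using h(3)[rule_format, of "Suc l", THEN conjunct2] by simp
    show ?thesis
      using zc_lamsum_operator_pair[where X="\<lambda>i. G (int i)" and Y=K and c="\<lambda>_. 0" and R="Ulam U"]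
        zc_lamsum_operator_pair[where X=gamma and Y=rho and c="\<lambda>lam. lam" and R="Ulam U"]
        h(4-6) KJ KM rhoJ rhoM by (simp add: Ut_isospectral Ut_def)
  qed
  done

end
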